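(* Let $n, r, d$ be positive integers with $n\geqslant r+1$ and $d\geqslant2$. Then $\mathcal{A}_r^d$ is a percolating set of $K_n^d$ in the $r$-neighbor bootstrap percolation process.
   Context: All graphs are finite, simple and undirected. For a nonnegative integer $r$ and a graph $G$, the $r$-neighbor bootstrap percolation process on $G$ starts with a set $A_0\subseteq V(G)$ of initially active vertices, and for $i\geqslant 1$, $A_i=A_{i-1}\cup\{v\in V(G) : |N(v)\cap A_{i-1}|\geqslant r\}$. The set $A_0$ is a percolating set if $\bigcup_{i\geqslant 0}A_i=V(G)$. $K_n^d$ has vertex set $[\![n]\!]^d$, where $[\![n]\!]=\{0,1,\ldots,n-1\}$, and two vertices are adjacent iff they differ in exactly one coordinate. For $t=(t_1,\ldots,t_d)\in\{0,1\}^d$ and $P\subseteq[\![n]\!]^d$, let $P(t)$ be the set of $(x_1,\ldots,x_d)\in[\![n]\!]^d$ for which there is $(p_1,\ldots,p_d)\in P$ with $x_i=t_i(n-1-p_i)+(1-t_i)p_i$ for all $i$. Let $A_r^d=\{(x_1,\ldots,x_d)\in[\![n]\!]^d : \sum_{i=1}^d x_i\leqslant\lceil r/2\rceil-1\}$, let $T=\{(t_1,\ldots,t_d)\in\{0,1\}^d : t_1=t_2\}$, and $\mathcal{A}_r^d=\bigcup_{t\in T}A_r^d(t)$. *)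

theory Defs
  imports Complex_Main
begin

definition bp_step :: "'a set \<Rightarrow> ('a \<Rightarrow> 'a \<Rightarrow> bool) \<Rightarrow> nat \<Rightarrow> 'a set \<Rightarrow> 'a set" where
  "bp_step V E r A = A \<union> {v \<in> V. card {u \<in> V. E v u \<and> u \<in> A} \<ge> r}"

definition bp_active :: "'a set \<Rightarrow> ('a \<Rightarrow> 'a \<Rightarrow> bool) \<Rightarrow> nat \<Rightarrow> 'a set \<Rightarrow> nat \<Rightarrow> 'a set" where
  "bp_active V E r A0 i = (bp_step V E r ^^ i) A0"

definition percolating :: "'a set \<Rightarrow> ('a \<Rightarrow> 'a \<Rightarrow> bool) \<Rightarrow> nat \<Rightarrow> 'a set \<Rightarrow> bool" where
  "percolating V E r A0 \<longleftrightarrow> A0 \<subseteq> V \<and> (\<Union>i. bp_active V E r A0 i) = V"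

text \<open>The Hamming graph K_n^d: vertices are lists of length d with entries in {0..n-1}
  (coordinate i of the paper is list index i-1); adjacent iff they differ in exactly one coordinate.\<close>

definition hverts :: "nat \<Rightarrow> nat \<Rightarrow> nat list set" where
  "hverts n d = {x. length x = d \<and> (\<forall>i<d. x ! i < n)}"

definition hadj :: "nat \<Rightarrow> nat list \<Rightarrow> nat list \<Rightarrow> bool" where
  "hadj d x y \<longleftrightarrow> card {i. i < d \<and> x ! i \<noteq> y ! i} = 1"

definition reflect :: "nat \<Rightarrow> nat \<Rightarrow> nat list set \<Rightarrow> nat list \<Rightarrow> nat list set" where
  "reflect n d P t = {x \<in> hverts n d. \<exists>p\<in>P. \<forall>i<d.
      x ! i = t ! i * (n - 1 - p ! i) + (1 - t ! i) * p ! i}"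

definition base_set :: "nat \<Rightarrow> nat \<Rightarrow> nat \<Rightarrow> nat list set" where
  "base_set n d r = {x \<in> hverts n d. real_of_int (int (sum_list x)) \<le> real_of_int (\<lceil>real r / 2\<rceil> - 1)}"

definition Tset :: "nat \<Rightarrow> nat list set" where
  "Tset d = {t. length t = d \<and> set t \<subseteq> {0, 1} \<and> t ! 0 = t ! 1}"

definition calA :: "nat \<Rightarrow> nat \<Rightarrow> nat \<Rightarrow> nat list set" where
  "calA n d r = (\<Union>t\<in>Tset d. reflect n d (base_set n d r) t)"

end

(* Let k = ceil(r/2) and, for a vertex x, let D(x) be the sum over the coordinates i >= 3 of the
   distance from x_i to the nearer end of [[n]].  Moving one such coordinate strictly closer to an
   end gives 2 D(x) neighbours of x with smaller D, so by induction on D every x with D(x) >= k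
   becomes active, as 2k >= r.  If D(x) < k, put K = k - D(x) and consider the plane through x
   spanned by the first two coordinates.  Each of its points has 2 D(x) active neighbours outside
   the plane, so inside it we are running 2K-neighbour bootstrap percolation on the rook's graph
   K_n^2.  Because t_1 = t_2 for t in T, the initial set contains the two opposite corner triangles
   a + b < K and (n-1-a) + (n-1-b) < K of this plane, and since 2K <= n these percolate: the two
   off-diagonal K x K corner squares fill up by induction on a + b, then the two diagonal ones, and
   after that every row and every column contains 2K active points. *)

theory Submission
  imports Defs
begin

definition bp_closed :: "'a set \<Rightarrow> ('a \<Rightarrow> 'a \<Rightarrow> bool) \<Rightarrow> nat \<Rightarrow> 'a set \<Rightarrow> bool" where
  "bp_closed V E r C \<longleftrightarrow> (\<forall>v\<in>V. r \<le> card {u \<in> V. E v u \<and> u \<in> C} \<longrightarrow> v \<in> C)"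

lemma bp_closedD:
  assumes "bp_closed V E r C" "finite V" "v \<in> V"
    and "S \<subseteq> {u \<in> V. E v u \<and> u \<in> C}" "r \<le> card S"
  shows "v \<in> C"
proof -
  have "card S \<le> card {u \<in> V. E v u \<and> u \<in> C}"
    using assms(2,4) by (intro card_mono) auto
  then show ?thesis
    using assms(1,3,5) unfolding bp_closed_def by auto
qed

lemma bp_active_0: "bp_active V E r A0 0 = A0"
  by (simp add: bp_active_def)

lemma bp_active_Suc: "bp_active V E r A0 (Suc i) = bp_step V E r (bp_active V E r A0 i)"
  by (simp add: bp_active_def)

lemma bp_active_mono: "i \<le> j \<Longrightarrow> bp_active V E r A0 i \<subseteq> bp_active V E r A0 j"
  by (rule lift_Suc_mono_le) (auto simp: bp_active_Suc bp_step_def)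

lemma bp_active_subset: "A0 \<subseteq> V \<Longrightarrow> bp_active V E r A0 i \<subseteq> V"
  by (induction i) (auto simp: bp_active_0 bp_active_Suc bp_step_def)

lemma bp_closed_UN_bp_active:
  assumes "finite V"
  shows "bp_closed V E r (\<Union>i. bp_active V E r A0 i)"
  unfolding bp_closed_def
proof (intro ballI impI)
  let ?act = "bp_active V E r A0"
  fix v
  let ?N = "\<lambda>C. {u \<in> V. E v u \<and> u \<in> C}"
  assume v: "v \<in> V" and r: "r \<le> card (?N (\<Union>i. ?act i))"
  have "?act i \<subseteq> ?act j \<or> ?act j \<subseteq> ?act i" for i j
    using bp_active_mono nat_le_linear by metis
  then have chain: "subset.chain UNIV (range ?act)"
    unfolding subset.chain_def by auto
  have fin: "finite (?N (\<Union>i. ?act i))"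
    using assms by simp
  obtain B where "B \<in> range ?act" "?N (\<Union>i. ?act i) \<subseteq> B"
    by (rule finite_subset_Union_chain[OF fin _ _ chain]) auto
  then obtain m where "?N (\<Union>i. ?act i) \<subseteq> ?N (?act m)"
    by blast
  then have "card (?N (\<Union>i. ?act i)) \<le> card (?N (?act m))"
    using assms by (intro card_mono) auto
  then have "v \<in> ?act (Suc m)"
    using v r unfolding bp_active_Suc bp_step_def by simp
  then show "v \<in> (\<Union>i. ?act i)"
    by blast
qed

lemma percolatingI_bp_closed:
  assumes "finite V" "A0 \<subseteq> V"
    and "\<And>C. A0 \<subseteq> C \<Longrightarrow> bp_closed V E r C \<Longrightarrow> V \<subseteq> C"
  shows "percolating V E r A0"
proof -
  have "A0 \<subseteq> (\<Union>i. bp_active V E r A0 i)"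
    using UN_upper[of 0 UNIV "bp_active V E r A0"] by (simp add: bp_active_0)
  then have "V \<subseteq> (\<Union>i. bp_active V E r A0 i)"
    by (rule assms(3)[OF _ bp_closed_UN_bp_active[OF assms(1)]])
  moreover have "(\<Union>i. bp_active V E r A0 i) \<subseteq> V"
    using assms(2) bp_active_subset by blast
  ultimately show ?thesis
    using assms(2) unfolding percolating_def by (simp add: subset_antisym)
qed

(* Q, read as a set of vertices (a, b) of the rook's graph K_n^2, is closed under m-neighbour
   bootstrap percolation: the neighbours of (a, b) are the other points of its row and column. *)
definition rook_closed :: "nat \<Rightarrow> nat \<Rightarrow> (nat \<Rightarrow> nat \<Rightarrow> bool) \<Rightarrow> bool" where
  "rook_closed n m Q \<longleftrightarrow> (\<forall>a<n. \<forall>b<n.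
     m \<le> card {a'. a' < n \<and> a' \<noteq> a \<and> Q a' b} + card {b'. b' < n \<and> b' \<noteq> b \<and> Q a b'} \<longrightarrow> Q a b)"

lemma rook_closedD:
  assumes "rook_closed n m Q" "a < n" "b < n"
    and A: "A \<subseteq> {a'. a' < n \<and> a' \<noteq> a \<and> Q a' b}"
    and B: "B \<subseteq> {b'. b' < n \<and> b' \<noteq> b \<and> Q a b'}"
    and "m \<le> card A + card B"
  shows "Q a b"
proof -
  have "card A \<le> card {a'. a' < n \<and> a' \<noteq> a \<and> Q a' b}"
    using A by (intro card_mono) auto
  moreover have "card B \<le> card {b'. b' < n \<and> b' \<noteq> b \<and> Q a b'}"
    using B by (intro card_mono) auto
  ultimately show ?thesis
    using assms(1-3,6) unfolding rook_closed_def by fastforce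
qed

lemma rook_closed_transpose: "rook_closed n m Q \<Longrightarrow> rook_closed n m (\<lambda>a b. Q b a)"
  unfolding rook_closed_def by (simp add: add.commute)

(* The row of (i, n-1-j) contains K - i points of the low triangle and j earlier points of the
   square; its column contains i earlier points of the square and K - j points of the high triangle. *)
lemma rook_closed_corner_square:
  assumes Q: "rook_closed n (2 * K) Q" and "2 * K \<le> n"
    and low: "\<And>a b. a + b < K \<Longrightarrow> Q a b"
    and high: "\<And>a b. a + b < K \<Longrightarrow> Q (n - 1 - a) (n - 1 - b)"
  shows "i < K \<Longrightarrow> j < K \<Longrightarrow> Q i (n - 1 - j)"
proof (induction "i + j" arbitrary: i j rule: less_induct)
  case less
  have row: "{0..<K - i} \<union> {n - j..<n} \<subseteq> {b'. b' < n \<and> b' \<noteq> n - 1 - j \<and> Q i b'}"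
  proof
    fix b' assume "b' \<in> {0..<K - i} \<union> {n - j..<n}"
    then consider "b' < K - i" | "n - j \<le> b'" "b' < n" by auto
    then show "b' \<in> {b'. b' < n \<and> b' \<noteq> n - 1 - j \<and> Q i b'}"
    proof cases
      case 1
      then show ?thesis using low[of i b'] less assms(2) by auto
    next
      case 2
      then have "n - 1 - b' < j" "b' = n - 1 - (n - 1 - b')" by auto
      then show ?thesis using less.hyps[of i "n - 1 - b'"] less.prems 2 assms(2) by auto
    qed
  qed
  have col: "{0..<i} \<union> {n - (K - j)..<n} \<subseteq> {a'. a' < n \<and> a' \<noteq> i \<and> Q a' (n - 1 - j)}"
  proof
    fix a' assume "a' \<in> {0..<i} \<union> {n - (K - j)..<n}"
    then consider "a' < i" | "n - (K - j) \<le> a'" "a' < n" by auto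
    then show "a' \<in> {a'. a' < n \<and> a' \<noteq> i \<and> Q a' (n - 1 - j)}"
    proof cases
      case 1
      then show ?thesis using less.hyps[of a' j] less.prems assms(2) by auto
    next
      case 2
      then have "(n - 1 - a') + j < K" "a' = n - 1 - (n - 1 - a')" by auto
      then show ?thesis using high[of "n - 1 - a'" j] 2 less.prems assms(2) by auto
    qed
  qed
  have "card ({0..<K - i} \<union> {n - j..<n}) = (K - i) + j"
    using less assms(2) by (subst card_Un_disjoint) auto
  moreover have "card ({0..<i} \<union> {n - (K - j)..<n}) = i + (K - j)"
    using less assms(2) by (subst card_Un_disjoint) auto
  ultimately show ?case
    using less assms(2) by (intro rook_closedD[OF Q _ _ col row]) auto
qed

lemma rook_closed_percolates:
  assumes Q: "rook_closed n (2 * K) Q" and nK: "2 * K \<le> n"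
    and low: "\<And>a b. a + b < K \<Longrightarrow> Q a b"
    and high: "\<And>a b. a + b < K \<Longrightarrow> Q (n - 1 - a) (n - 1 - b)"
    and "a < n" "b < n"
  shows "Q a b"
proof -
  define L where "L = {0..<K}"
  define H where "H = {n - K..<n}"
  have H_mirror: "h \<in> H \<Longrightarrow> h = n - 1 - (n - 1 - h) \<and> n - 1 - h \<in> L" for h
    using nK by (auto simp: L_def H_def)
  have LH: "Q l h" "Q h l" if "l \<in> L" "h \<in> H" for l h
    using rook_closed_corner_square[OF Q nK low high, of l "n - 1 - h"]
      rook_closed_corner_square[OF rook_closed_transpose[OF Q] nK, of l "n - 1 - h"]
      low high H_mirror[OF that(2)] that(1)
    by (auto simp: L_def add.commute)
  have card_LH: "card L = K" "card H = K"
    using nK by (auto simp: L_def H_def)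
  have LL: "Q l l'" if "l \<in> L" "l' \<in> L" for l l'
    using that nK LH card_LH by (intro rook_closedD[OF Q, of _ _ H H]) (auto simp: L_def H_def)
  have HH: "Q h h'" if "h \<in> H" "h' \<in> H" for h h'
    using that nK LH card_LH by (intro rook_closedD[OF Q, of _ _ L L]) (auto simp: L_def H_def)
  define R where "R = L \<union> H"
  have R: "R \<subseteq> {..<n}" "card R = 2 * K"
    using nK by (auto simp: R_def L_def H_def card_Un_disjoint)
  have RR: "Q x y" if "x \<in> R" "y \<in> R" for x y
    using that LH LL HH unfolding R_def by blast
  have Rrow: "Q x y" if "x \<in> R" "y < n" for x y
  proof (cases "y \<in> R")
    case False
    then show ?thesis
      using that RR R by (intro rook_closedD[OF Q, of _ _ "{}" R]) auto
  qed (use that RR in blast)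
  show ?thesis
  proof (cases "a \<in> R")
    case False
    then show ?thesis
      using assms(5,6) Rrow R by (intro rook_closedD[OF Q, of _ _ R "{}"]) auto
  qed (use assms(6) Rrow in blast)
qed

lemma finite_hverts: "finite (hverts n d)"
proof (rule finite_subset)
  show "hverts n d \<subseteq> {xs. set xs \<subseteq> {..<n} \<and> length xs = d}"
    by (auto simp: hverts_def in_set_conv_nth)
qed (rule finite_lists_length_eq, simp)

lemma list_update_in_hverts:
  assumes "y \<in> hverts n d" "c < n"
  shows "y[i := c] \<in> hverts n d"
proof -
  have "y[i := c] ! j < n" if "j < d" for j
    using assms that by (cases "j = i") (auto simp: hverts_def)
  then show ?thesis
    using assms by (simp add: hverts_def)
qed

lemma hadj_list_update:
  assumes "length y = d" "i < d" "c \<noteq> y ! i"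
  shows "hadj d y (y[i := c])"
proof -
  have "{j. j < d \<and> y ! j \<noteq> y[i := c] ! j} = {i}"
    using assms by (auto simp: nth_list_update)
  then show ?thesis
    by (simp add: hadj_def)
qed

lemma card_coordinate_updates:
  assumes "length y = d" "I \<subseteq> {..<d}"
    and "\<And>i. i \<in> I \<Longrightarrow> finite (S i)" "\<And>i. i \<in> I \<Longrightarrow> y ! i \<notin> S i"
  shows "card ((\<lambda>(i, c). y[i := c]) ` (SIGMA i:I. S i)) = (\<Sum>i\<in>I. card (S i))"
proof -
  have "inj_on (\<lambda>(i, c). y[i := c]) (SIGMA i:I. S i)"
  proof (rule inj_onI, clarify)
    fix i c i' c'
    assume eq: "y[i := c] = y[i' := c']" and "i \<in> I" "c \<in> S i" "i' \<in> I" "c' \<in> S i'"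
    then have "i < length y" "i' < length y"
      using assms(1,2) by auto
    have "c = y[i' := c'] ! i"
      using eq \<open>i < length y\<close> by (metis nth_list_update_eq)
    then have "i = i'"
      using assms(4) \<open>i \<in> I\<close> \<open>c \<in> S i\<close> by (cases "i = i'") auto
    then show "i = i' \<and> c = c'"
      using \<open>c = y[i' := c'] ! i\<close> \<open>i' < length y\<close> by simp
  qed
  moreover have "finite I"
    using assms(2) finite_subset by blast
  ultimately show ?thesis
    using assms(3) by (simp add: card_image)
qed

definition depth :: "nat \<Rightarrow> nat \<Rightarrow> nat" where
  "depth n c = min c (n - 1 - c)"

definition upper_half :: "nat \<Rightarrow> nat \<Rightarrow> nat" where
  "upper_half n c = (if c \<le> n - 1 - c then 0 else 1)"

lemma depth_mirror:
  "c < n \<Longrightarrow> c = upper_half n c * (n - 1 - depth n c) + (1 - upper_half n c) * depth n c"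
  by (auto simp: upper_half_def depth_def)

definition shallower :: "nat \<Rightarrow> nat \<Rightarrow> nat set" where
  "shallower n v = {c. c < n \<and> depth n c < depth n v}"

lemma card_shallower:
  assumes "v < n"
  shows "card (shallower n v) = 2 * depth n v"
proof -
  have "shallower n v = {0..<depth n v} \<union> {n - depth n v..<n}"
    using assms by (auto simp: shallower_def depth_def)
  moreover have "card ({0..<depth n v} \<union> {n - depth n v..<n}) = 2 * depth n v"
    using assms by (subst card_Un_disjoint) (auto simp: depth_def)
  ultimately show ?thesis
    by simp
qed

definition outer_depth :: "nat \<Rightarrow> nat list \<Rightarrow> nat" where
  "outer_depth n x = (\<Sum>i = 2..<length x. depth n (x ! i))"

lemma outer_depth_update_01: "i < 2 \<Longrightarrow> outer_depth n (x[i := c]) = outer_depth n x"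
  unfolding outer_depth_def by (auto intro!: sum.cong)

lemma outer_depth_update_shallower:
  assumes "2 \<le> i" "i < length x" "c \<in> shallower n (x ! i)"
  shows "outer_depth n (x[i := c]) < outer_depth n x"
  unfolding outer_depth_def length_list_update
proof (rule sum_strict_mono_ex1)
  show "\<forall>j\<in>{2..<length x}. depth n (x[i := c] ! j) \<le> depth n (x ! j)"
    using assms by (auto simp: nth_list_update shallower_def)
  show "\<exists>j\<in>{2..<length x}. depth n (x[i := c] ! j) < depth n (x ! j)"
    using assms by (intro bexI[of _ i]) (auto simp: shallower_def)
qed simp

lemma sum_lessThan_split_01:
  fixes f :: "nat \<Rightarrow> 'a::comm_monoid_add"
  shows "2 \<le> d \<Longrightarrow> (\<Sum>i<d. f i) = f 0 + f 1 + (\<Sum>i = 2..<d. f i)"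
  by (simp add: lessThan_atLeast0 sum.atLeast_Suc_lessThan numeral_2_eq_2 add.assoc)

lemma mem_bp_closed_if_slice_neighbours:
  assumes d: "2 \<le> d" and x: "x \<in> hverts n d"
    and C: "bp_closed (hverts n d) (hadj d) r C"
    and shallower_in: "\<And>y. y \<in> hverts n d \<Longrightarrow> outer_depth n y < outer_depth n x \<Longrightarrow> y \<in> C"
    and A: "A \<subseteq> {a. a < n \<and> a \<noteq> x ! 0 \<and> x[0 := a] \<in> C}"
    and B: "B \<subseteq> {b. b < n \<and> b \<noteq> x ! 1 \<and> x[1 := b] \<in> C}"
    and r: "r \<le> card A + card B + 2 * outer_depth n x"
  shows "x \<in> C"
proof -
  define S where "S i = (if i = 0 then A else if i = 1 then B else shallower n (x ! i))" for i
  define N where "N = (\<lambda>(i, c). x[i := c]) ` (SIGMA i:{..<d}. S i)"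
  have len: "length x = d" and x_lt: "\<And>i. i < d \<Longrightarrow> x ! i < n"
    using x by (auto simp: hverts_def)
  have S: "c < n" "c \<noteq> x ! i" if "c \<in> S i" for i c
    using that A B by (auto simp: S_def shallower_def split: if_splits)
  have N_nbrs: "N \<subseteq> {u \<in> hverts n d. hadj d x u \<and> u \<in> C}"
  proof (clarsimp simp: N_def)
    fix i c assume i: "i < d" and c: "c \<in> S i"
    have "x[i := c] \<in> C"
    proof (cases "i < 2")
      case True
      then show ?thesis
        using A B c by (auto simp: S_def less_2_cases_iff)
    next
      case False
      then show ?thesis
        using c i len S(1)[OF c]
        by (intro shallower_in list_update_in_hverts[OF x] outer_depth_update_shallower) (auto simp: S_def)
    qed
    then show "x[i := c] \<in> hverts n d \<and> hadj d x (x[i := c]) \<and> x[i := c] \<in> C"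
      using S[OF c] i len x by (simp add: list_update_in_hverts hadj_list_update)
  qed
  have "finite (S i)" for i
    by (rule finite_subset[of _ "{..<n}"]) (use S(1) in auto)
  then have "card N = (\<Sum>i<d. card (S i))"
    unfolding N_def using S(2) len by (intro card_coordinate_updates) auto
  also have "\<dots> = card A + card B + (\<Sum>i = 2..<d. card (S i))"
    by (subst sum_lessThan_split_01[OF d]) (simp add: S_def)
  also have "(\<Sum>i = 2..<d. card (S i)) = 2 * outer_depth n x"
    unfolding outer_depth_def len sum_distrib_left by (rule sum.cong) (auto simp: S_def card_shallower x_lt)
  finally have "r \<le> card N"
    using r by simp
  then show ?thesis
    by (rule bp_closedD[OF C finite_hverts x N_nbrs])
qed

lemma slice_rook_closed:
  assumes d: "2 \<le> d" and x: "x \<in> hverts n d"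
    and C: "bp_closed (hverts n d) (hadj d) r C"
    and shallower_in: "\<And>y. y \<in> hverts n d \<Longrightarrow> outer_depth n y < outer_depth n x \<Longrightarrow> y \<in> C"
    and r: "r \<le> m + 2 * outer_depth n x"
  shows "rook_closed n m (\<lambda>a b. x[0 := a, 1 := b] \<in> C)"
  unfolding rook_closed_def
proof (intro allI impI)
  fix a b
  let ?A = "{a'. a' < n \<and> a' \<noteq> a \<and> x[0 := a', 1 := b] \<in> C}"
  let ?B = "{b'. b' < n \<and> b' \<noteq> b \<and> x[0 := a, 1 := b'] \<in> C}"
  assume "a < n" "b < n" and m: "m \<le> card ?A + card ?B"
  define y where "y = x[0 := a, 1 := b]"
  have len: "length x = d"
    using x by (simp add: hverts_def)
  have y: "y \<in> hverts n d"
    unfolding y_def using x \<open>a < n\<close> \<open>b < n\<close> by (intro list_update_in_hverts)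
  have y01: "y ! 0 = a" "y ! 1 = b"
    using d len by (auto simp: y_def nth_list_update)
  have depth_y: "outer_depth n y = outer_depth n x"
    by (simp add: y_def outer_depth_update_01)
  have "y[0 := a'] = x[0 := a', 1 := b]" for a'
    by (simp add: y_def list_update_swap)
  moreover have "y[1 := b'] = x[0 := a, 1 := b']" for b'
    by (simp add: y_def)
  ultimately have "y \<in> C"
    using m r y01 depth_y
    by (intro mem_bp_closed_if_slice_neighbours[OF d y C _, of ?A ?B]) (auto intro: shallower_in)
  then show "x[0 := a, 1 := b] \<in> C"
    by (simp add: y_def)
qed

lemma ceiling_half: "\<lceil>real r / 2\<rceil> = int ((r + 1) div 2)"
  by (simp add: ceiling_eq_iff) linarith

lemma mem_base_set_iff: "p \<in> base_set n d r \<longleftrightarrow> p \<in> hverts n d \<and> sum_list p < (r + 1) div 2"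
  unfolding base_set_def ceiling_half of_int_le_iff by auto

lemma list_update_01_mem_calA:
  assumes x: "x \<in> hverts n d" and d: "2 \<le> d" and "a < n" "b < n" and t: "t \<le> 1"
    and small: "a + b + outer_depth n x < (r + 1) div 2"
  shows "x[0 := t * (n - 1 - a) + (1 - t) * a, 1 := t * (n - 1 - b) + (1 - t) * b] \<in> calA n d r"
proof -
  \<comment> \<open>p is the point of the base simplex that the reflection ts maps to the given vertex: away from
     the first two coordinates, ts flips exactly the coordinates of x lying in the upper half.\<close>
  define ts where "ts = map (\<lambda>i. if i < 2 then t else upper_half n (x ! i)) [0..<d]"
  define f where "f i = (if i = 0 then a else if i = 1 then b else depth n (x ! i))" for i
  define p where "p = map f [0..<d]"
  define y where "y = x[0 := t * (n - 1 - a) + (1 - t) * a, 1 := t * (n - 1 - b) + (1 - t) * b]"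
  have len: "length x = d" and x_lt: "\<And>i. i < d \<Longrightarrow> x ! i < n"
    using x by (auto simp: hverts_def)
  have t01: "t = 0 \<or> t = 1"
    using t by auto
  have "ts \<in> Tset d"
    using d t01 by (auto simp: Tset_def ts_def upper_half_def)
  have "sum_list p = (\<Sum>i<d. f i)"
    by (simp add: p_def sum_list_sum_nth lessThan_atLeast0)
  also have "\<dots> = f 0 + f 1 + (\<Sum>i = 2..<d. f i)"
    by (rule sum_lessThan_split_01[OF d])
  also have "\<dots> = a + b + outer_depth n x"
    unfolding outer_depth_def len by (simp add: f_def)
  finally have "p \<in> base_set n d r"
    using small x_lt \<open>a < n\<close> \<open>b < n\<close>
    by (auto simp: mem_base_set_iff hverts_def p_def f_def depth_def)
  moreover have "y \<in> hverts n d"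
    unfolding y_def using x t01 \<open>a < n\<close> \<open>b < n\<close> by (intro list_update_in_hverts) auto
  moreover have "y ! i = ts ! i * (n - 1 - p ! i) + (1 - ts ! i) * p ! i" if "i < d" for i
  proof (cases "i < 2")
    case True
    then show ?thesis
      using that d len by (auto simp: y_def ts_def p_def f_def less_2_cases_iff)
  next
    case False
    then show ?thesis
      using that depth_mirror[OF x_lt[OF that]] by (simp add: y_def ts_def p_def f_def)
  qed
  ultimately have "y \<in> reflect n d (base_set n d r) ts"
    unfolding reflect_def by blast
  then show ?thesis
    using \<open>ts \<in> Tset d\<close> unfolding calA_def y_def by blast
qed

lemma mem_bp_closed_if_shallower_in:
  assumes d: "2 \<le> d" and n: "r + 1 \<le> n"
    and calA: "calA n d r \<subseteq> C" and C: "bp_closed (hverts n d) (hadj d) r C"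
    and x: "x \<in> hverts n d"
    and shallower_in: "\<And>y. y \<in> hverts n d \<Longrightarrow> outer_depth n y < outer_depth n x \<Longrightarrow> y \<in> C"
  shows "x \<in> C"
proof -
  define k where "k = (r + 1) div 2"
  have rk: "r \<le> 2 * k" and kn: "2 * k \<le> n"
    using n by (auto simp: k_def)
  show ?thesis
  proof (cases "k \<le> outer_depth n x")
    case True
    then show ?thesis
      using rk by (intro mem_bp_closed_if_slice_neighbours[OF d x C shallower_in, of "{}" "{}"]) auto
  next
    case False
    define K where "K = k - outer_depth n x"
    have Q: "rook_closed n (2 * K) (\<lambda>a b. x[0 := a, 1 := b] \<in> C)"
      using rk False by (intro slice_rook_closed[OF d x C shallower_in]) (auto simp: K_def)
    have corner: "x[0 := t * (n - 1 - a) + (1 - t) * a, 1 := t * (n - 1 - b) + (1 - t) * b] \<in> C"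
      if "a + b < K" "t \<le> 1" for a b t
      using that kn calA list_update_01_mem_calA[OF x d, of a b t r] by (auto simp: K_def k_def)
    have "x[0 := x ! 0, 1 := x ! 1] \<in> C"
    proof (rule rook_closed_percolates[OF Q])
      show "2 * K \<le> n"
        using kn by (simp add: K_def)
      show "x[0 := a, 1 := b] \<in> C" if "a + b < K" for a b
        using corner[OF that, of 0] by simp
      show "x[0 := n - 1 - a, 1 := n - 1 - b] \<in> C" if "a + b < K" for a b
        using corner[OF that, of 1] by simp
      show "x ! 0 < n" "x ! 1 < n"
        using x d by (auto simp: hverts_def)
    qed
    then show ?thesis
      by simp
  qed
qed

lemma hverts_subset_bp_closed:
  assumes "2 \<le> d" "r + 1 \<le> n" "calA n d r \<subseteq> C" "bp_closed (hverts n d) (hadj d) r C"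
  shows "hverts n d \<subseteq> C"
proof
  fix x assume "x \<in> hverts n d"
  then show "x \<in> C"
  proof (induction "outer_depth n x" arbitrary: x rule: less_induct)
    case less
    then show ?case
      using mem_bp_closed_if_shallower_in[OF assms] by blast
  qed
qed

theorem lemma4p1:
  fixes n r d :: nat
  assumes "0 < n" and "0 < r" and "0 < d" and "n \<ge> r + 1" and "d \<ge> 2"
  shows "percolating (hverts n d) (hadj d) r (calA n d r)"
proof (rule percolatingI_bp_closed[OF finite_hverts])
  show "calA n d r \<subseteq> hverts n d"
    unfolding calA_def reflect_def by auto
  show "hverts n d \<subseteq> C" if "calA n d r \<subseteq> C" "bp_closed (hverts n d) (hadj d) r C" for C
    using hverts_subset_bp_closed[OF assms(5,4) that] .
qed

end
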